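(* Let $\mathcal S$ be the toy stabilizer group of a non-maximal information state on $n$ elementary systems, and let parties $A$ and $B$ hold $k$ and $n-k$ of these elementary systems respectively. Let $\mathcal S_A$ (resp. $\mathcal S_B$) be the subgroup of elements of $\mathcal S$ acting as the identity on every elementary system of $B$ (resp. of $A$), and $\mathcal S_A\cdot\mathcal S_B$ the group they generate. If $\mathcal S = \mathcal S_A\cdot\mathcal S_B$, then the state is not entangled.
   Context: Toy Pauli matrices $\mathcal{X} = \mathrm{diag}(1,-1,1,-1)$, $\mathcal{Y} = \mathrm{diag}(1,-1,-1,1)$, $\mathcal{Z} = \mathrm{diag}(1,1,-1,-1)$; toy Pauli group $G_n = \{\alpha\,p_1\otimes\cdots\otimes p_n: p_i\in\{\mathbb 1_4,\mathcal X,\mathcal Y,\mathcal Z\},\alpha=\pm1\}$. Elements of $G_n$ "commute" if their images under the homomorphism $\mathcal X_k\mapsto X_k$, $\mathcal Z_k\mapsto Z_k$, $-\mathbb 1\mapsto -\mathbb 1$ into the $n$-qubit Pauli group commute. A toy stabilizer group is a subgroup of $G_n$ of pairwise "commuting" elements not containing $-\mathbb 1$; its epistemic state is the set of ontic states $e_{i_1}\otimes\cdots\otimes e_{i_n}$ fixed by all its elements; it is non-maximal information (mixed) if it has fewer than $n$ independent generators. A product state between $A$ and $B$ is an epistemic state $E_A\times E_B = \{(a,b): a\in E_A, b\in E_B\}$ with $E_A, E_B$ valid epistemic states on $A$ and $B$. The mixture of epistemic states with disjoint ontic bases whose union is a valid epistemic state is the state whose ontic basis is that union. A mixed state is entangled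 if it cannot be written as a mixture of product states. *)

theory Defs
  imports Main
begin

datatype pauli = PI | PX | PY | PZ

text \<open>Diagonal entries (indices 0..3) of the toy Pauli matrices
  1 = diag(1,1,1,1), X = diag(1,-1,1,-1), Y = diag(1,-1,-1,1), Z = diag(1,1,-1,-1).\<close>
fun pdiag :: "pauli \<Rightarrow> nat \<Rightarrow> int" where
  "pdiag PI i = 1"
| "pdiag PX i = (if i = 0 \<or> i = 2 then 1 else -1)"
| "pdiag PY i = (if i = 0 \<or> i = 3 then 1 else -1)"
| "pdiag PZ i = (if i = 0 \<or> i = 1 then 1 else -1)"

text \<open>Product of toy Pauli matrices (they are diagonal, so this is exact, no phases).\<close>
fun pmult :: "pauli \<Rightarrow> pauli \<Rightarrow> pauli" where
  "pmult PI q = q"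
| "pmult PX PI = PX" | "pmult PX PX = PI" | "pmult PX PY = PZ" | "pmult PX PZ = PY"
| "pmult PY PI = PY" | "pmult PY PX = PZ" | "pmult PY PY = PI" | "pmult PY PZ = PX"
| "pmult PZ PI = PZ" | "pmult PZ PX = PY" | "pmult PZ PY = PX" | "pmult PZ PZ = PI"

text \<open>An element \<alpha> p_1 \<otimes> ... \<otimes> p_n of G_n is represented as (\<alpha>, [p_1,...,p_n]).\<close>
type_synonym toy = "int \<times> pauli list"

definition toyG :: "nat \<Rightarrow> toy set" where
  "toyG n = {(a, ps). (a = 1 \<or> a = -1) \<and> length ps = n}"

definition toy_one :: "nat \<Rightarrow> toy" where
  "toy_one n = (1, replicate n PI)"

definition toy_minus_one :: "nat \<Rightarrow> toy" where
  "toy_minus_one n = (-1, replicate n PI)"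

definition toy_mult :: "toy \<Rightarrow> toy \<Rightarrow> toy" where
  "toy_mult g h = (fst g * fst h, map2 pmult (snd g) (snd h))"

text \<open>Under X \<mapsto> X, Z \<mapsto> Z (hence Y = XZ \<mapsto> XZ), two single-site images anticommute
  iff both are non-identity and different; Pauli strings commute iff the number of
  anticommuting sites is even.\<close>
definition panticomm :: "pauli \<Rightarrow> pauli \<Rightarrow> bool" where
  "panticomm p q \<longleftrightarrow> p \<noteq> PI \<and> q \<noteq> PI \<and> p \<noteq> q"

definition toy_commute :: "toy \<Rightarrow> toy \<Rightarrow> bool" where
  "toy_commute g h \<longleftrightarrow>
     even (card {j. j < length (snd g) \<and> panticomm (snd g ! j) (snd h ! j)})"

inductive_set toy_gen :: "nat \<Rightarrow> toy set \<Rightarrow> toy set" for n gs where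
  one: "toy_one n \<in> toy_gen n gs"
| step: "g \<in> gs \<Longrightarrow> h \<in> toy_gen n gs \<Longrightarrow> toy_mult g h \<in> toy_gen n gs"

definition toy_subgroup :: "nat \<Rightarrow> toy set \<Rightarrow> bool" where
  "toy_subgroup n S \<longleftrightarrow> S \<subseteq> toyG n \<and> toy_one n \<in> S \<and>
     (\<forall>g\<in>S. \<forall>h\<in>S. toy_mult g h \<in> S)"

definition toy_stabilizer :: "nat \<Rightarrow> toy set \<Rightarrow> bool" where
  "toy_stabilizer n S \<longleftrightarrow> toy_subgroup n S \<and>
     (\<forall>g\<in>S. \<forall>h\<in>S. toy_commute g h) \<and> toy_minus_one n \<notin> S"

text \<open>Ontic state e_{i_1} \<otimes> ... \<otimes> e_{i_n} is represented by [i_1,...,i_n] (indices 0..3).\<close>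
definition ontic :: "nat \<Rightarrow> nat list set" where
  "ontic n = {is. length is = n \<and> (\<forall>i\<in>set is. i < 4)}"

text \<open>Diagonal entry of the matrix g at the ontic state is; g fixes is iff it equals 1.\<close>
definition toy_act :: "toy \<Rightarrow> nat list \<Rightarrow> int" where
  "toy_act g is = fst g * prod_list (map2 pdiag (snd g) is)"

definition epistemic :: "nat \<Rightarrow> toy set \<Rightarrow> nat list set" where
  "epistemic n S = {is \<in> ontic n. \<forall>g\<in>S. toy_act g is = 1}"

definition valid_epistemic :: "nat \<Rightarrow> nat list set \<Rightarrow> bool" where
  "valid_epistemic n E \<longleftrightarrow> (\<exists>S. toy_stabilizer n S \<and> E = epistemic n S)"

text \<open>Non-maximal information: S has fewer than n independent generators, i.e. it is
  generated by fewer than n of its elements.\<close>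
definition non_maximal :: "nat \<Rightarrow> toy set \<Rightarrow> bool" where
  "non_maximal n S \<longleftrightarrow> (\<exists>gs. gs \<subseteq> S \<and> finite gs \<and> card gs < n \<and> toy_gen n gs = S)"

definition product_state :: "nat \<Rightarrow> nat \<Rightarrow> nat list set \<Rightarrow> bool" where
  "product_state k n E \<longleftrightarrow> (\<exists>EA EB. valid_epistemic k EA \<and> valid_epistemic (n - k) EB \<and>
      E = {a @ b | a b. a \<in> EA \<and> b \<in> EB})"

definition mixture_of_products :: "nat \<Rightarrow> nat \<Rightarrow> nat list set \<Rightarrow> bool" where
  "mixture_of_products k n E \<longleftrightarrow> (\<exists>F. finite F \<and> F \<noteq> {} \<and>
      (\<forall>P\<in>F. product_state k n P) \<and>
      (\<forall>P\<in>F. \<forall>Q\<in>F. P \<noteq> Q \<longrightarrow> P \<inter> Q = {}) \<and> \<Union>F = E)"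

definition entangled :: "nat \<Rightarrow> nat \<Rightarrow> nat list set \<Rightarrow> bool" where
  "entangled k n E \<longleftrightarrow> \<not> mixture_of_products k n E"

definition sub_A :: "nat \<Rightarrow> nat \<Rightarrow> toy set \<Rightarrow> toy set" where
  "sub_A k n S = {g \<in> S. \<forall>j. k \<le> j \<and> j < n \<longrightarrow> snd g ! j = PI}"

definition sub_B :: "nat \<Rightarrow> toy set \<Rightarrow> toy set" where
  "sub_B k S = {g \<in> S. \<forall>j < k. snd g ! j = PI}"

end

theory Submission
  imports Defs
begin

text \<open>Every generator of \<open>S\<close> acts as the identity on one of the two parties, so restricting the
  generators of \<open>\<S>\<^sub>A\<close> to the systems of \<open>A\<close> and those of \<open>\<S>\<^sub>B\<close> to the systems of \<open>B\<close> gives toy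
  stabilizer groups \<open>T\<^sub>A\<close>, \<open>T\<^sub>B\<close>. An ontic state \<open>a @ b\<close> is fixed by all of \<open>S\<close> iff it is fixed by the
  generators, i.e. iff \<open>a\<close> is fixed by \<open>T\<^sub>A\<close> and \<open>b\<close> by \<open>T\<^sub>B\<close>. Hence the epistemic state of \<open>S\<close> is
  the single product state \<open>E(T\<^sub>A) \<times> E(T\<^sub>B)\<close>, a (trivial) mixture of product states.\<close>

definition toy_take :: "nat \<Rightarrow> toy \<Rightarrow> toy" where
  "toy_take m g = (fst g, take m (snd g))"

definition toy_drop :: "nat \<Rightarrow> toy \<Rightarrow> toy" where
  "toy_drop m g = (fst g, drop m (snd g))"

definition anticomm_sites :: "pauli list \<Rightarrow> pauli list \<Rightarrow> nat set" where
  "anticomm_sites ps qs = {j. j < length ps \<and> panticomm (ps ! j) (qs ! j)}"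

lemma toy_commute_iff_anticomm_sites:
  "toy_commute g h \<longleftrightarrow> even (card (anticomm_sites (snd g) (snd h)))"
  by (simp add: toy_commute_def anticomm_sites_def)

lemma pdiag_pmult: "i < 4 \<Longrightarrow> pdiag (pmult p q) i = pdiag p i * pdiag q i"
  by (cases p; cases q) (auto simp: less_Suc_eq numeral_eq_Suc)

lemma pmult_PI_right [simp]: "pmult p PI = p"
  by (cases p) auto

lemma map2_pmult_replicate_PI: "map2 pmult ps (replicate (length ps) PI) = ps"
  by (induction ps) auto

lemma set_map2_pmult_trivial:
  assumes "set ps \<subseteq> {PI}" "set qs \<subseteq> {PI}"
  shows "set (map2 pmult ps qs) \<subseteq> {PI}"
proof -
  have "pmult p q = PI" if "(p, q) \<in> set (zip ps qs)" for p q
  proof -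
    have "p = PI" "q = PI"
      using set_zip_leftD[OF that] set_zip_rightD[OF that] assms by auto
    then show ?thesis by simp
  qed
  then show ?thesis by auto
qed

lemma prod_pdiag_trivial: "set ps \<subseteq> {PI} \<Longrightarrow> prod_list (map2 pdiag ps xs) = 1"
proof (induction ps arbitrary: xs)
  case (Cons p ps)
  then show ?case by (cases xs) auto
qed simp

lemma prod_pdiag_pmult:
  assumes "length ps = length xs" "length qs = length xs" "set xs \<subseteq> {..<4}"
  shows "prod_list (map2 pdiag (map2 pmult ps qs) xs) =
    prod_list (map2 pdiag ps xs) * prod_list (map2 pdiag qs xs)"
  using assms
proof (induction xs arbitrary: ps qs)
  case (Cons x xs)
  then obtain p ps' q qs' where "ps = p # ps'" "qs = q # qs'"
    by (metis length_Suc_conv)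
  with Cons show ?case by (simp add: pdiag_pmult)
qed simp

lemma prod_pdiag_append:
  "length ps = length xs \<Longrightarrow>
    prod_list (map2 pdiag (ps @ qs) (xs @ ys)) =
    prod_list (map2 pdiag ps xs) * prod_list (map2 pdiag qs ys)"
  by simp

lemma set_take_subset_singleton_iff:
  "set (take k xs) \<subseteq> {x} \<longleftrightarrow> (\<forall>j<k. j < length xs \<longrightarrow> xs ! j = x)"
proof -
  have "(\<forall>y\<in>set (take k xs). y = x) \<longleftrightarrow> (\<forall>j<k. j < length xs \<longrightarrow> xs ! j = x)"
    by (auto simp: all_set_conv_all_nth)
  then show ?thesis by blast
qed

lemma set_drop_subset_singleton_iff:
  "set (drop k xs) \<subseteq> {x} \<longleftrightarrow> (\<forall>j. k \<le> j \<and> j < length xs \<longrightarrow> xs ! j = x)"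
proof -
  have "(\<forall>y\<in>set (drop k xs). y = x) \<longleftrightarrow> (\<forall>i. i < length xs - k \<longrightarrow> xs ! (k + i) = x)"
    by (simp add: all_set_conv_all_nth)
  also have "\<dots> \<longleftrightarrow> (\<forall>j. k \<le> j \<and> j < length xs \<longrightarrow> xs ! j = x)"
  proof (intro iffI allI impI)
    fix j assume H: "\<forall>i. i < length xs - k \<longrightarrow> xs ! (k + i) = x" and j: "k \<le> j \<and> j < length xs"
    then have "j - k < length xs - k" by arith
    then show "xs ! j = x" using H[rule_format, of "j - k"] j by simp
  qed auto
  finally show ?thesis by blast
qed

lemma card_anticomm_sites_append:
  assumes "length ps = length ps'"
  shows "card (anticomm_sites (ps @ qs) (ps' @ qs')) =
    card (anticomm_sites ps ps') + card (anticomm_sites qs qs')"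
proof -
  have "anticomm_sites (ps @ qs) (ps' @ qs') =
      anticomm_sites ps ps' \<union> (\<lambda>j. j + length ps) ` anticomm_sites qs qs'"
  proof (intro equalityI subsetI)
    fix j assume j: "j \<in> anticomm_sites (ps @ qs) (ps' @ qs')"
    show "j \<in> anticomm_sites ps ps' \<union> (\<lambda>j. j + length ps) ` anticomm_sites qs qs'"
    proof (cases "j < length ps")
      case False
      then have "j - length ps \<in> anticomm_sites qs qs'"
        using j assms by (auto simp: anticomm_sites_def nth_append)
      then show ?thesis using False by (auto intro!: image_eqI[of _ _ "j - length ps"])
    qed (use j assms in \<open>auto simp: anticomm_sites_def nth_append\<close>)
  qed (use assms in \<open>auto simp: anticomm_sites_def nth_append\<close>)
  moreover have "anticomm_sites ps ps' \<inter> (\<lambda>j. j + length ps) ` anticomm_sites qs qs' = {}"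
    by (auto simp: anticomm_sites_def)
  moreover have "finite (anticomm_sites xs ys)" for xs ys
    by (simp add: anticomm_sites_def)
  ultimately show ?thesis
    by (simp add: card_Un_disjoint card_image)
qed

lemma anticomm_sites_trivial: "set ps \<subseteq> {PI} \<Longrightarrow> anticomm_sites ps qs = {}"
proof -
  assume "set ps \<subseteq> {PI}"
  then have "ps ! j = PI" if "j < length ps" for j
    using that nth_mem by blast
  then show ?thesis by (auto simp: anticomm_sites_def panticomm_def)
qed

subsection \<open>Restriction of toy Pauli operators to a block of systems\<close>

lemma toy_take_mult: "toy_take m (toy_mult g h) = toy_mult (toy_take m g) (toy_take m h)"
  by (simp add: toy_take_def toy_mult_def take_map take_zip)

lemma toy_drop_mult: "toy_drop m (toy_mult g h) = toy_mult (toy_drop m g) (toy_drop m h)"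
  by (simp add: toy_drop_def toy_mult_def drop_map drop_zip)

lemma toy_commute_split:
  assumes "length (snd g) = length (snd h)"
  shows "toy_commute g h \<longleftrightarrow>
    even (card (anticomm_sites (take m (snd g)) (take m (snd h))) +
          card (anticomm_sites (drop m (snd g)) (drop m (snd h))))"
  using card_anticomm_sites_append[of "take m (snd g)" "take m (snd h)" "drop m (snd g)"
      "drop m (snd h)"] assms
  by (simp add: toy_commute_iff_anticomm_sites)

lemma toy_commute_toy_take:
  assumes "length (snd g) = length (snd h)" "set (drop m (snd g)) \<subseteq> {PI}"
  shows "toy_commute (toy_take m g) (toy_take m h) \<longleftrightarrow> toy_commute g h"
  using toy_commute_split[OF assms(1), of m] assms(2)
  by (simp add: toy_commute_iff_anticomm_sites anticomm_sites_trivial toy_take_def)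

lemma toy_commute_toy_drop:
  assumes "length (snd g) = length (snd h)" "set (take m (snd g)) \<subseteq> {PI}"
  shows "toy_commute (toy_drop m g) (toy_drop m h) \<longleftrightarrow> toy_commute g h"
  using toy_commute_split[OF assms(1), of m] assms(2)
  by (simp add: toy_commute_iff_anticomm_sites anticomm_sites_trivial toy_drop_def)

lemma toy_act_toy_take:
  assumes "length (snd g) = length a + length b" "set (drop (length a) (snd g)) \<subseteq> {PI}"
  shows "toy_act g (a @ b) = toy_act (toy_take (length a) g) a"
proof -
  let ?p = "take (length a) (snd g)" and ?q = "drop (length a) (snd g)"
  have len: "length ?p = length a" using assms(1) by simp
  have "toy_act g (a @ b) = fst g * prod_list (map2 pdiag (?p @ ?q) (a @ b))"
    by (simp add: toy_act_def)
  also have "\<dots> = fst g * (prod_list (map2 pdiag ?p a) * prod_list (map2 pdiag ?q b))"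
    unfolding prod_pdiag_append[OF len] ..
  finally show ?thesis
    using assms(2) by (simp add: prod_pdiag_trivial toy_act_def toy_take_def)
qed

lemma toy_act_toy_drop:
  assumes "length (snd g) = length a + length b" "set (take (length a) (snd g)) \<subseteq> {PI}"
  shows "toy_act g (a @ b) = toy_act (toy_drop (length a) g) b"
proof -
  let ?p = "take (length a) (snd g)" and ?q = "drop (length a) (snd g)"
  have len: "length ?p = length a" using assms(1) by simp
  have "toy_act g (a @ b) = fst g * prod_list (map2 pdiag (?p @ ?q) (a @ b))"
    by (simp add: toy_act_def)
  also have "\<dots> = fst g * (prod_list (map2 pdiag ?p a) * prod_list (map2 pdiag ?q b))"
    unfolding prod_pdiag_append[OF len] ..
  finally show ?thesis
    using assms(2) by (simp add: prod_pdiag_trivial toy_act_def toy_drop_def)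
qed

lemma toy_act_mult:
  assumes "length (snd g) = length xs" "length (snd h) = length xs" "set xs \<subseteq> {..<4}"
  shows "toy_act (toy_mult g h) xs = toy_act g xs * toy_act h xs"
  using assms by (simp add: toy_act_def toy_mult_def prod_pdiag_pmult)

subsection \<open>Stabilizer groups acting trivially on one party\<close>

lemma toyG_length: "g \<in> toyG n \<Longrightarrow> length (snd g) = n"
  by (auto simp: toyG_def)

lemma toy_minus_one_eqI:
  assumes "g \<in> toyG n" "fst g = -1" "set (snd g) \<subseteq> {PI}"
  shows "g = toy_minus_one n"
  using assms by (auto simp: toyG_def toy_minus_one_def intro!: replicate_eqI)

lemma sub_A_eq:
  assumes "S \<subseteq> toyG n"
  shows "sub_A k n S = {g \<in> S. set (drop k (snd g)) \<subseteq> {PI}}"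
proof -
  have "length (snd g) = n" if "g \<in> S" for g
    using that assms toyG_length by blast
  then show ?thesis by (auto simp: sub_A_def set_drop_subset_singleton_iff)
qed

lemma sub_B_eq:
  assumes "S \<subseteq> toyG n" "k \<le> n"
  shows "sub_B k S = {g \<in> S. set (take k (snd g)) \<subseteq> {PI}}"
proof -
  have "length (snd g) = n" if "g \<in> S" for g
    using that assms toyG_length by blast
  then show ?thesis using assms(2) by (auto simp: sub_B_def set_take_subset_singleton_iff)
qed

lemma toy_stabilizer_subset:
  assumes "toy_stabilizer n S" "T \<subseteq> S" "toy_one n \<in> T" "\<forall>g\<in>T. \<forall>h\<in>T. toy_mult g h \<in> T"
  shows "toy_stabilizer n T"
  using assms unfolding toy_stabilizer_def toy_subgroup_def by blast

lemma toy_stabilizer_trivial_drop: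
  assumes "toy_stabilizer n S"
  shows "toy_stabilizer n {g \<in> S. set (drop m (snd g)) \<subseteq> {PI}}"
  using assms set_map2_pmult_trivial
  by (intro toy_stabilizer_subset[OF assms])
    (auto simp: toy_stabilizer_def toy_subgroup_def toy_one_def toy_mult_def drop_map drop_zip)

lemma toy_stabilizer_trivial_take:
  assumes "toy_stabilizer n S"
  shows "toy_stabilizer n {g \<in> S. set (take m (snd g)) \<subseteq> {PI}}"
  using assms set_map2_pmult_trivial
  by (intro toy_stabilizer_subset[OF assms])
    (auto simp: toy_stabilizer_def toy_subgroup_def toy_one_def toy_mult_def take_map take_zip)

lemma toy_minus_one_if_toy_take:
  assumes "g \<in> toyG n" "set (drop m (snd g)) \<subseteq> {PI}" "toy_take m g = toy_minus_one m"
  shows "g = toy_minus_one n"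
proof (rule toy_minus_one_eqI[OF assms(1)])
  show "fst g = -1"
    using assms(3) by (simp add: toy_take_def toy_minus_one_def)
  have "set (snd g) = set (take m (snd g)) \<union> set (drop m (snd g))"
    unfolding set_append[symmetric] by simp
  also have "\<dots> \<subseteq> {PI}"
    using assms(2,3) by (auto simp: toy_take_def toy_minus_one_def)
  finally show "set (snd g) \<subseteq> {PI}" .
qed

lemma toy_minus_one_if_toy_drop:
  assumes "g \<in> toyG n" "set (take m (snd g)) \<subseteq> {PI}" "toy_drop m g = toy_minus_one (n - m)"
  shows "g = toy_minus_one n"
proof (rule toy_minus_one_eqI[OF assms(1)])
  show "fst g = -1"
    using assms(3) by (simp add: toy_drop_def toy_minus_one_def)
  have "set (snd g) = set (take m (snd g)) \<union> set (drop m (snd g))"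
    unfolding set_append[symmetric] by simp
  also have "\<dots> \<subseteq> {PI}"
    using assms(2,3) by (auto simp: toy_drop_def toy_minus_one_def)
  finally show "set (snd g) \<subseteq> {PI}" .
qed

lemma toy_stabilizer_toy_take:
  assumes "toy_stabilizer n T" "m \<le> n" and triv: "\<forall>g\<in>T. set (drop m (snd g)) \<subseteq> {PI}"
  shows "toy_stabilizer m (toy_take m ` T)"
proof -
  have TG: "T \<subseteq> toyG n" and one: "toy_one n \<in> T" and mult: "\<forall>g\<in>T. \<forall>h\<in>T. toy_mult g h \<in> T"
    and comm: "\<forall>g\<in>T. \<forall>h\<in>T. toy_commute g h" and minus: "toy_minus_one n \<notin> T"
    using assms(1) by (auto simp: toy_stabilizer_def toy_subgroup_def)
  show ?thesis
    unfolding toy_stabilizer_def toy_subgroup_def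
  proof (intro conjI ballI)
    show "toy_take m ` T \<subseteq> toyG m"
      using TG assms(2) by (auto simp: toyG_def toy_take_def)
    have "toy_take m (toy_one n) = toy_one m"
      using assms(2) by (simp add: toy_take_def toy_one_def)
    then show "toy_one m \<in> toy_take m ` T"
      using one by (metis image_eqI)
  next
    fix g' h' assume "g' \<in> toy_take m ` T" "h' \<in> toy_take m ` T"
    then obtain g h where "g \<in> T" "h \<in> T" "g' = toy_take m g" "h' = toy_take m h" by blast
    then show "toy_mult g' h' \<in> toy_take m ` T"
      using mult by (metis image_eqI toy_take_mult)
  next
    fix g' h' assume "g' \<in> toy_take m ` T" "h' \<in> toy_take m ` T"
    then obtain g h where "g \<in> T" "h \<in> T" "g' = toy_take m g" "h' = toy_take m h" by blast
    moreover have "length (snd g) = length (snd h)"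
      using \<open>g \<in> T\<close> \<open>h \<in> T\<close> TG toyG_length by blast
    ultimately show "toy_commute g' h'"
      using comm triv by (simp add: toy_commute_toy_take)
  next
    show "toy_minus_one m \<notin> toy_take m ` T"
      using minus TG triv toy_minus_one_if_toy_take by (metis image_iff subsetD)
  qed
qed

lemma toy_stabilizer_toy_drop:
  assumes "toy_stabilizer n T" "m \<le> n" and triv: "\<forall>g\<in>T. set (take m (snd g)) \<subseteq> {PI}"
  shows "toy_stabilizer (n - m) (toy_drop m ` T)"
proof -
  have TG: "T \<subseteq> toyG n" and one: "toy_one n \<in> T" and mult: "\<forall>g\<in>T. \<forall>h\<in>T. toy_mult g h \<in> T"
    and comm: "\<forall>g\<in>T. \<forall>h\<in>T. toy_commute g h" and minus: "toy_minus_one n \<notin> T"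
    using assms(1) by (auto simp: toy_stabilizer_def toy_subgroup_def)
  show ?thesis
    unfolding toy_stabilizer_def toy_subgroup_def
  proof (intro conjI ballI)
    show "toy_drop m ` T \<subseteq> toyG (n - m)"
      using TG assms(2) by (auto simp: toyG_def toy_drop_def)
    have "toy_drop m (toy_one n) = toy_one (n - m)"
      using assms(2) by (simp add: toy_drop_def toy_one_def)
    then show "toy_one (n - m) \<in> toy_drop m ` T"
      using one by (metis image_eqI)
  next
    fix g' h' assume "g' \<in> toy_drop m ` T" "h' \<in> toy_drop m ` T"
    then obtain g h where "g \<in> T" "h \<in> T" "g' = toy_drop m g" "h' = toy_drop m h" by blast
    then show "toy_mult g' h' \<in> toy_drop m ` T"
      using mult by (metis image_eqI toy_drop_mult)
  next
    fix g' h' assume "g' \<in> toy_drop m ` T" "h' \<in> toy_drop m ` T"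
    then obtain g h where "g \<in> T" "h \<in> T" "g' = toy_drop m g" "h' = toy_drop m h" by blast
    moreover have "length (snd g) = length (snd h)"
      using \<open>g \<in> T\<close> \<open>h \<in> T\<close> TG toyG_length by blast
    ultimately show "toy_commute g' h'"
      using comm triv by (simp add: toy_commute_toy_drop)
  next
    show "toy_minus_one (n - m) \<notin> toy_drop m ` T"
      using minus TG triv toy_minus_one_if_toy_drop by (metis image_iff subsetD)
  qed
qed


lemma toy_gen_subset_toyG:
  assumes "gs \<subseteq> toyG n"
  shows "toy_gen n gs \<subseteq> toyG n"
proof
  fix g assume "g \<in> toy_gen n gs"
  then show "g \<in> toyG n"
    using assms by induction (auto simp: toyG_def toy_one_def toy_mult_def)
qed

lemma toy_gen_superset:
  assumes "gs \<subseteq> toyG n"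
  shows "gs \<subseteq> toy_gen n gs"
proof
  fix g assume g: "g \<in> gs"
  have "toy_mult g (toy_one n) = g"
    using g assms toyG_length[of g n] map2_pmult_replicate_PI[of "snd g"]
    by (auto simp: toy_mult_def toy_one_def)
  moreover have "toy_mult g (toy_one n) \<in> toy_gen n gs"
    by (rule toy_gen.step[OF g toy_gen.one])
  ultimately show "g \<in> toy_gen n gs" by simp
qed

lemma epistemic_antimono: "gs \<subseteq> hs \<Longrightarrow> epistemic n hs \<subseteq> epistemic n gs"
  by (auto simp: epistemic_def)

lemma epistemic_toy_gen:
  assumes "gs \<subseteq> toyG n"
  shows "epistemic n (toy_gen n gs) = epistemic n gs"
proof
  show "epistemic n (toy_gen n gs) \<subseteq> epistemic n gs"
    using epistemic_antimono[OF toy_gen_superset[OF assms]] .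
  show "epistemic n gs \<subseteq> epistemic n (toy_gen n gs)"
  proof
    fix xs assume xs: "xs \<in> epistemic n gs"
    then have len: "length xs = n" and ran: "set xs \<subseteq> {..<4}"
      by (auto simp: epistemic_def ontic_def)
    have "toy_act g xs = 1" if "g \<in> toy_gen n gs" for g
      using that
    proof induction
      case one
      have "set (replicate n PI) \<subseteq> {PI}" by auto
      then show ?case by (simp add: toy_act_def toy_one_def prod_pdiag_trivial)
    next
      case (step g h)
      have "length (snd g) = n" "length (snd h) = n"
        using step.hyps assms toy_gen_subset_toyG toyG_length by blast+
      then show ?case
        using step xs len ran by (simp add: toy_act_mult epistemic_def)
    qed
    then show "xs \<in> epistemic n (toy_gen n gs)"
      using xs by (simp add: epistemic_def)
  qed
qed

lemma append_in_ontic_iff: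
  "length a = m \<Longrightarrow> m \<le> n \<Longrightarrow> a @ b \<in> ontic n \<longleftrightarrow> a \<in> ontic m \<and> b \<in> ontic (n - m)"
  by (auto simp: ontic_def)

lemma append_in_epistemic_iff:
  assumes "m \<le> n" "GA \<subseteq> toyG n" "GB \<subseteq> toyG n"
    and "\<forall>g\<in>GA. set (drop m (snd g)) \<subseteq> {PI}" "\<forall>g\<in>GB. set (take m (snd g)) \<subseteq> {PI}"
    and "length a = m"
  shows "a @ b \<in> epistemic n (GA \<union> GB) \<longleftrightarrow>
    a \<in> epistemic m (toy_take m ` GA) \<and> b \<in> epistemic (n - m) (toy_drop m ` GB)"
proof (cases "length b = n - m")
  case True
  have len: "length (snd g) = length a + length b" if "g \<in> GA \<union> GB" for g
    using that assms(1-3,6) True toyG_length by fastforce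
  have "toy_act g (a @ b) = toy_act (toy_take m g) a" if "g \<in> GA" for g
    using toy_act_toy_take[of g a b] len[of g] that assms(4,6) by auto
  moreover have "toy_act g (a @ b) = toy_act (toy_drop m g) b" if "g \<in> GB" for g
    using toy_act_toy_drop[of g a b] len[of g] that assms(5,6) by auto
  ultimately show ?thesis
    using assms(1,6) by (auto simp: epistemic_def append_in_ontic_iff)
next
  case False
  then show ?thesis
    using assms(6) by (auto simp: epistemic_def ontic_def)
qed

lemma epistemic_union_eq_product:
  assumes "m \<le> n" "GA \<subseteq> toyG n" "GB \<subseteq> toyG n"
    and "\<forall>g\<in>GA. set (drop m (snd g)) \<subseteq> {PI}" "\<forall>g\<in>GB. set (take m (snd g)) \<subseteq> {PI}"
  shows "epistemic n (GA \<union> GB) =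
    {a @ b | a b. a \<in> epistemic m (toy_take m ` GA) \<and> b \<in> epistemic (n - m) (toy_drop m ` GB)}"
proof (intro equalityI subsetI)
  fix xs assume xs: "xs \<in> epistemic n (GA \<union> GB)"
  have len: "length (take m xs) = m"
    using xs assms(1) by (auto simp: epistemic_def ontic_def)
  have "take m xs @ drop m xs \<in> epistemic n (GA \<union> GB)"
    using xs by simp
  then have "take m xs \<in> epistemic m (toy_take m ` GA) \<and> drop m xs \<in> epistemic (n - m) (toy_drop m ` GB)"
    using append_in_epistemic_iff[OF assms len] by blast
  then show "xs \<in> {a @ b | a b. a \<in> epistemic m (toy_take m ` GA) \<and> b \<in> epistemic (n - m) (toy_drop m ` GB)}"
    by (metis (mono_tags, lifting) append_take_drop_id mem_Collect_eq)
next
  fix xs assume "xs \<in> {a @ b | a b. a \<in> epistemic m (toy_take m ` GA) \<and> b \<in> epistemic (n - m) (toy_drop m ` GB)}"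
  then obtain a b where "xs = a @ b" "a \<in> epistemic m (toy_take m ` GA)" "b \<in> epistemic (n - m) (toy_drop m ` GB)"
    by blast
  moreover then have "length a = m" by (simp add: epistemic_def ontic_def)
  ultimately show "xs \<in> epistemic n (GA \<union> GB)"
    using append_in_epistemic_iff[OF assms] by blast
qed

lemma product_state_not_entangled: "product_state k n E \<Longrightarrow> \<not> entangled k n E"
  unfolding entangled_def mixture_of_products_def by (intro notI exI[of _ "{E}"]) auto

theorem mainTheorem8:
  fixes n k :: nat and S :: "toy set"
  assumes "toy_stabilizer n S"
    and "non_maximal n S"
    and "k \<le> n"
    and "S = toy_gen n (sub_A k n S \<union> sub_B k S)"
  shows "\<not> entangled k n (epistemic n S)"
proof -
  have SG: "S \<subseteq> toyG n"
    using assms(1) by (simp add: toy_stabilizer_def toy_subgroup_def)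
  define A where "A = {g \<in> S. set (drop k (snd g)) \<subseteq> {PI}}"
  define B where "B = {g \<in> S. set (take k (snd g)) \<subseteq> {PI}}"
  have stab_A: "toy_stabilizer k (toy_take k ` A)"
    unfolding A_def
    using toy_stabilizer_toy_take[OF toy_stabilizer_trivial_drop[OF assms(1)] assms(3)] by blast
  have stab_B: "toy_stabilizer (n - k) (toy_drop k ` B)"
    unfolding B_def
    using toy_stabilizer_toy_drop[OF toy_stabilizer_trivial_take[OF assms(1)] assms(3)] by blast
  have A_eq: "sub_A k n S = A"
    unfolding A_def by (rule sub_A_eq[OF SG])
  have B_eq: "sub_B k S = B"
    unfolding B_def by (rule sub_B_eq[OF SG assms(3)])
  have gen: "S = toy_gen n (A \<union> B)"
    using assms(4) unfolding A_eq B_eq .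
  have "A \<union> B \<subseteq> toyG n"
    using SG by (auto simp: A_def B_def)
  then have "epistemic n S = epistemic n (A \<union> B)"
    using gen epistemic_toy_gen by metis
  also have "\<dots> = {a @ b | a b. a \<in> epistemic k (toy_take k ` A) \<and> b \<in> epistemic (n - k) (toy_drop k ` B)}"
    using assms(3) SG by (intro epistemic_union_eq_product) (auto simp: A_def B_def)
  finally have "product_state k n (epistemic n S)"
    unfolding product_state_def valid_epistemic_def using stab_A stab_B by blast
  then show ?thesis
    by (rule product_state_not_entangled)
qed

end
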